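(* Let $k=k(n)$ and $m=m(n)$ be functions of $n$. (i) Suppose that $\frac{k^2n}{m}=\log n+\omega$, where $\omega=\omega(n)\rightarrow\infty$ as $n\rightarrow\infty$. Then asymptotically almost surely $G(n,m,k)$ contains no isolated vertex. (ii) Suppose that $\frac{k^2n}{m}=\log n-\omega$, where $\omega=\omega(n)\rightarrow\infty$ as $n\rightarrow\infty$. Then asymptotically almost surely $G(n,m,k)$ contains an isolated vertex.
   Context: The uniform random intersection graph $G(n,m,k)$ (for positive integers $k\le m$) is the random graph on a set $V$ of $n$ nodes defined as follows: fix a set $M$ of $m$ colours; to each node $v\in V$ assign a subset $F_v\subseteq M$ of exactly $k$ distinct colours, chosen uniformly at random among all $k$-subsets of $M$, independently for different nodes; distinct nodes $u,v$ are joined by an edge if and only if $F_u\cap F_v\neq\emptyset$. An event holds asymptotically almost surely if its probability tends to $1$ as $n\rightarrow\infty$. Here $\log$ denotes the natural logarithm. *)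

theory Defs
  imports "HOL-Probability.Probability"
begin

text \<open>Colours are M = {0..<m}; nodes are V = {0..<n}. A colour assignment is a function
  F with F v a k-subset of M for each node v < n (and F v = undefined elsewhere).\<close>

definition colour_sets :: "nat \<Rightarrow> nat \<Rightarrow> nat set set" where
  "colour_sets m k = {S. S \<subseteq> {0..<m} \<and> card S = k}"

definition assignments :: "nat \<Rightarrow> nat \<Rightarrow> nat \<Rightarrow> (nat \<Rightarrow> nat set) set" where
  "assignments n m k = PiE {0..<n} (\<lambda>_. colour_sets m k)"

text \<open>Uniform random intersection graph G(n,m,k): the independent uniform choices of
  k-subsets for each node amount to the uniform distribution on all assignments.\<close>
definition rig :: "nat \<Rightarrow> nat \<Rightarrow> nat \<Rightarrow> (nat \<Rightarrow> nat set) pmf" where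
  "rig n m k = pmf_of_set (assignments n m k)"

definition rig_adj :: "(nat \<Rightarrow> nat set) \<Rightarrow> nat \<Rightarrow> nat \<Rightarrow> bool" where
  "rig_adj F u v \<longleftrightarrow> u \<noteq> v \<and> F u \<inter> F v \<noteq> {}"

definition has_isolated_vertex :: "nat \<Rightarrow> (nat \<Rightarrow> nat set) \<Rightarrow> bool" where
  "has_isolated_vertex n F \<longleftrightarrow> (\<exists>v<n. \<forall>u<n. \<not> rig_adj F u v)"

end

theory Submission
  imports Defs "HOL-Real_Asymp.Real_Asymp"
begin

text \<open>A fixed vertex is isolated with probability \<open>p^(n-1)\<close>, where
  \<open>p = C(m-k,k) / C(m,k) \<le> exp(-k\<^sup>2/m)\<close> is the probability that two colour sets are disjoint.
  Above the threshold the expected number \<open>n p^(n-1)\<close> of isolated vertices tends to 0.  Below it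
  this expectation tends to infinity, and since two fixed vertices are jointly isolated with
  probability at most \<open>p (p\<^sup>2)^(n-2)\<close>, the second moment (Chung-Erdos) inequality bounds the
  probability of an isolated vertex from below by \<open>1 / (1 / (n p^(n-1)) + 1 / p)\<close>, which tends
  to 1.\<close>

definition avoiding :: "nat \<Rightarrow> nat \<Rightarrow> nat set \<Rightarrow> nat set set" where
  "avoiding m k X = {T \<in> colour_sets m k. T \<inter> X = {}}"

definition isolated_at :: "nat \<Rightarrow> nat \<Rightarrow> (nat \<Rightarrow> nat set) set" where
  "isolated_at n v = {F. \<forall>u<n. \<not> rig_adj F u v}"

text \<open>The probability that a uniformly random \<open>k\<close>-subset of an \<open>m\<close>-set misses a fixed
  \<open>j\<close>-subset.\<close>
definition avoid_prob :: "nat \<Rightarrow> nat \<Rightarrow> nat \<Rightarrow> real" where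
  "avoid_prob m k j = real ((m - j) choose k) / real (m choose k)"

section \<open>Probability of avoiding a set of colours\<close>

lemma avoid_prob_eq_prod:
  assumes "k \<le> m" "j \<le> m"
  shows "avoid_prob m k j = (\<Prod>i<k. (real m - real j - real i) / (real m - real i))"
proof -
  have choose_eq: "real (a choose k) = (\<Prod>i<k. real a - real i) / fact k" for a
    by (simp add: binomial_gbinomial gbinomial_prod_rev atLeast0LessThan)
  have "(\<Prod>i<k. real m - real i) \<noteq> 0"
    using assms by (auto simp: prod_zero_iff)
  then show ?thesis
    using assms by (simp add: avoid_prob_def choose_eq of_nat_diff prod_dividef)
qed

lemma avoid_prob_nonneg: "0 \<le> avoid_prob m k j"
  by (simp add: avoid_prob_def)

lemma avoid_prob_eq_0:
  assumes "1 \<le> k" "m < j + k"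
  shows "avoid_prob m k j = 0"
proof -
  have "m - j < k" using assms by linarith
  then show ?thesis by (simp add: avoid_prob_def binomial_eq_0)
qed

lemma avoid_prob_le_exp:
  assumes "1 \<le> k" "k \<le> m"
  shows "avoid_prob m k j \<le> exp (- (real j * real k / real m))"
proof (cases "j + k \<le> m")
  case False
  then show ?thesis using assms by (simp add: avoid_prob_eq_0)
next
  case True
  have "avoid_prob m k j = (\<Prod>i<k. (real m - real j - real i) / (real m - real i))"
    using True assms by (simp add: avoid_prob_eq_prod)
  also have "\<dots> \<le> (\<Prod>i<k. exp (- (real j / real m)))"
  proof (rule prod_mono)
    fix i assume "i \<in> {..<k}"
    then have i: "i < k" by simp
    then have pos: "real m - real i > 0" using assms by simp
    have "(real m - real j - real i) / (real m - real i) = 1 - real j / (real m - real i)"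
      using pos by (simp add: field_simps)
    also have "\<dots> \<le> 1 - real j / real m"
      using pos by (simp add: divide_left_mono)
    also have "\<dots> \<le> exp (- (real j / real m))"
      using exp_ge_add_one_self[of "- (real j / real m)"] by simp
    finally show "0 \<le> (real m - real j - real i) / (real m - real i) \<and>
        (real m - real j - real i) / (real m - real i) \<le> exp (- (real j / real m))"
      using True i pos by simp
  qed
  also have "\<dots> = exp (- (real j * real k / real m))"
    by (simp add: exp_of_nat_mult[symmetric])
  finally show ?thesis .
qed

lemma avoid_prob_le_1:
  assumes "1 \<le> k" "k \<le> m"
  shows "avoid_prob m k j \<le> 1"
  using avoid_prob_le_exp[OF assms, of j] by (rule order_trans) simp

lemma avoid_prob_ge:
  assumes "j + k \<le> m" "k < m"
  shows "(1 - real j / (real m - real k)) ^ k \<le> avoid_prob m k j"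
proof -
  have "(1 - real j / (real m - real k)) ^ k = (\<Prod>i<k. 1 - real j / (real m - real k))"
    by simp
  also have "\<dots> \<le> (\<Prod>i<k. (real m - real j - real i) / (real m - real i))"
  proof (rule prod_mono)
    fix i assume "i \<in> {..<k}"
    then have i: "i < k" by simp
    have mk: "real m - real k > 0" using assms by simp
    have "(real m - real j - real i) / (real m - real i) = 1 - real j / (real m - real i)"
      using i assms by (simp add: field_simps)
    moreover have "real j / (real m - real i) \<le> real j / (real m - real k)"
      using mk i by (intro divide_left_mono) auto
    moreover have "real j / (real m - real k) \<le> 1"
      using mk assms by (simp add: divide_le_eq)
    ultimately show "0 \<le> 1 - real j / (real m - real k) \<and>
        1 - real j / (real m - real k) \<le> (real m - real j - real i) / (real m - real i)"
      by simp
  qed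
  also have "\<dots> = avoid_prob m k j"
    using assms by (simp add: avoid_prob_eq_prod)
  finally show ?thesis .
qed

lemma avoid_prob_submult:
  assumes "1 \<le> k" "k \<le> m"
  shows "avoid_prob m k (i + j) \<le> avoid_prob m k i * avoid_prob m k j"
proof (cases "i + j + k \<le> m")
  case False
  then show ?thesis using assms by (simp add: avoid_prob_eq_0 avoid_prob_nonneg)
next
  case True
  have "avoid_prob m k (i + j) = (\<Prod>l<k. (real m - real (i + j) - real l) / (real m - real l))"
    using True by (simp add: avoid_prob_eq_prod)
  also have "\<dots> \<le> (\<Prod>l<k. (real m - real i - real l) / (real m - real l)
                         * ((real m - real j - real l) / (real m - real l)))"
  proof (rule prod_mono)
    fix l assume "l \<in> {..<k}"
    then have l: "l < k" by simp
    define y where "y = real m - real l"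
    have y: "y > 0" using l assms by (simp add: y_def)
    \<comment> \<open>\<open>(y - i - j) y \<le> (y - i)(y - j)\<close> since the difference is \<open>i j \<ge> 0\<close>\<close>
    have "(y - real i - real j) / y \<le> (y - real i) / y * ((y - real j) / y)"
      using y by (simp add: field_simps power2_eq_square)
    moreover have "0 \<le> (y - real i - real j) / y"
      using True l y by (simp add: y_def)
    ultimately show "0 \<le> (real m - real (i + j) - real l) / (real m - real l) \<and>
        (real m - real (i + j) - real l) / (real m - real l)
          \<le> (real m - real i - real l) / (real m - real l) * ((real m - real j - real l) / (real m - real l))"
      by (simp add: y_def algebra_simps)
  qed
  also have "\<dots> = avoid_prob m k i * avoid_prob m k j"
    using True by (subst prod.distrib) (simp add: avoid_prob_eq_prod)
  finally show ?thesis .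
qed

lemma avoid_prob_ge_exp:
  assumes "1 \<le> k" "3 * k \<le> m"
  shows "exp (- (real k ^ 2 / real m) * (1 + 6 * (real k / real m))) \<le> avoid_prob m k k"
proof -
  define t where "t = real k / real m"
  define x where "x = real k / (real m - real k)"
  have m: "real m > 0" "real m - real k > 0" using assms by simp_all
  have t: "0 \<le> t" "t \<le> 1/3" using assms m by (simp_all add: t_def field_simps)
  have x: "0 \<le> x" "x \<le> 1/2" using assms m by (simp_all add: x_def field_simps)
  have kx: "real k * x = (real k ^ 2 / real m) / (1 - t)"
    using m by (simp add: x_def t_def field_simps power2_eq_square)
  have x2: "1 + 2 * x = (1 + t) / (1 - t)"
    using m by (simp add: x_def t_def field_simps)
  have "real k * (x + 2 * x\<^sup>2) = (real k * x) * (1 + 2 * x)"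
    by (simp add: power2_eq_square algebra_simps)
  also have "\<dots> = (real k ^ 2 / real m) * ((1 + t) / (1 - t)\<^sup>2)"
    unfolding kx x2 by (simp add: power2_eq_square)
  also have "\<dots> \<le> (real k ^ 2 / real m) * (1 + 6 * t)"
  proof (rule mult_left_mono)
    have "1 + t \<le> (1 + 6 * t) * (1 - t)\<^sup>2"
    proof -
      have "(1 + 6 * t) * (1 - t)\<^sup>2 - (1 + t) = t * ((3 - 2 * t) * (1 - 3 * t))"
        by (simp add: algebra_simps power2_eq_square)
      moreover have "0 \<le> t * ((3 - 2 * t) * (1 - 3 * t))" using t by simp
      ultimately show ?thesis by linarith
    qed
    then show "(1 + t) / (1 - t)\<^sup>2 \<le> 1 + 6 * t" using t by (simp add: divide_le_eq)
  qed simp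
  finally have exponent: "real k * (x + 2 * x\<^sup>2) \<le> (real k ^ 2 / real m) * (1 + 6 * t)" .
  have "exp (- (real k ^ 2 / real m) * (1 + 6 * t)) \<le> exp (- x - 2 * x\<^sup>2) ^ k"
    using exponent by (simp add: exp_of_nat_mult[symmetric] algebra_simps)
  also have "\<dots> \<le> (1 - x) ^ k"
  proof (rule power_mono)
    have "exp (- x - 2 * x\<^sup>2) \<le> exp (ln (1 - x))"
      using ln_one_minus_pos_lower_bound[OF x] by simp
    then show "exp (- x - 2 * x\<^sup>2) \<le> 1 - x" using x by simp
  qed simp
  also have "\<dots> \<le> avoid_prob m k k"
    unfolding x_def using assms by (intro avoid_prob_ge) auto
  finally show ?thesis by (simp add: t_def)
qed

section \<open>Counting colour assignments\<close>

lemma finite_colour_sets: "finite (colour_sets m k)"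
  unfolding colour_sets_def by (rule finite_subset[of _ "Pow {0..<m}"]) auto

lemma card_colour_sets: "card (colour_sets m k) = m choose k"
  unfolding colour_sets_def using n_subsets[of "{0..<m}" k] by simp

lemma finite_avoiding: "finite (avoiding m k X)"
  unfolding avoiding_def using finite_colour_sets by simp

lemma card_avoiding:
  assumes "X \<subseteq> {0..<m}"
  shows "card (avoiding m k X) = (m - card X) choose k"
proof -
  have "avoiding m k X = {T. T \<subseteq> {0..<m} - X \<and> card T = k}"
    unfolding avoiding_def colour_sets_def by auto
  moreover have "card ({0..<m} - X) = m - card X"
    using assms by (simp add: card_Diff_subset finite_subset)
  ultimately show ?thesis using n_subsets[of "{0..<m} - X" k] by simp
qed

lemma finite_assignments: "finite (assignments n m k)"
  unfolding assignments_def by (intro finite_PiE finite_colour_sets) auto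

lemma card_assignments: "card (assignments n m k) = (m choose k) ^ n"
  unfolding assignments_def by (simp add: card_PiE card_colour_sets)

lemma assignments_Int_isolated_at:
  assumes "v < n"
  shows "assignments n m k \<inter> isolated_at n v =
    (\<Union>S\<in>colour_sets m k. PiE {0..<n} (\<lambda>u. if u = v then {S} else avoiding m k S))"
    (is "_ = (\<Union>S\<in>_. ?P S)")
proof (intro set_eqI iffI)
  fix F assume "F \<in> assignments n m k \<inter> isolated_at n v"
  then have "F v \<in> colour_sets m k" and "F \<in> ?P (F v)"
    using assms by (auto simp: assignments_def isolated_at_def rig_adj_def avoiding_def PiE_iff)
  then show "F \<in> (\<Union>S\<in>colour_sets m k. ?P S)" by blast
next
  fix F assume "F \<in> (\<Union>S\<in>colour_sets m k. ?P S)"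
  then obtain S where S: "S \<in> colour_sets m k" and F: "F \<in> ?P S" by blast
  have Fu: "F u \<in> (if u = v then {S} else avoiding m k S)" if "u < n" for u
    using PiE_mem[OF F, of u] that by simp
  have "F u \<in> colour_sets m k" if "u < n" for u
    using Fu[OF that] S by (auto simp: avoiding_def split: if_splits)
  then have "F \<in> assignments n m k"
    using F by (auto simp: assignments_def PiE_iff)
  moreover have "F u \<inter> F v = {}" if "u < n" "u \<noteq> v" for u
    using Fu[of v] Fu[OF that(1)] that assms by (auto simp: avoiding_def)
  then have "F \<in> isolated_at n v"
    unfolding isolated_at_def rig_adj_def by blast
  ultimately show "F \<in> assignments n m k \<inter> isolated_at n v" by blast
qed

lemma card_assignments_Int_isolated_at:
  assumes "v < n"
  shows "card (assignments n m k \<inter> isolated_at n v) = (m choose k) * ((m - k) choose k) ^ (n - 1)"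
proof -
  let ?P = "\<lambda>S. PiE {0..<n} (\<lambda>u. if u = v then {S} else avoiding m k S)"
  have "card (assignments n m k \<inter> isolated_at n v) = (\<Sum>S\<in>colour_sets m k. card (?P S))"
    unfolding assignments_Int_isolated_at[OF assms]
  proof (rule card_UN_disjoint[OF finite_colour_sets])
    show "\<forall>S\<in>colour_sets m k. finite (?P S)"
      by (auto intro!: finite_PiE simp: finite_avoiding)
    show "\<forall>S\<in>colour_sets m k. \<forall>T\<in>colour_sets m k. S \<noteq> T \<longrightarrow> ?P S \<inter> ?P T = {}"
      using assms by (auto dest!: PiE_mem[where x = v])
  qed
  also have "\<dots> = (\<Sum>S\<in>colour_sets m k. ((m - k) choose k) ^ (n - 1))"
  proof (rule sum.cong[OF refl])
    fix S assume "S \<in> colour_sets m k"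
    then have "card (avoiding m k S) = (m - k) choose k"
      by (simp add: card_avoiding colour_sets_def)
    then show "card (?P S) = ((m - k) choose k) ^ (n - 1)"
      using assms by (simp add: card_PiE if_distrib prod_gen_delta)
  qed
  finally show ?thesis by (simp add: card_colour_sets)
qed

lemma assignments_Int_isolated_at_pair_subset:
  assumes "u < n" "v < n" "u \<noteq> v"
  shows "assignments n m k \<inter> isolated_at n u \<inter> isolated_at n v \<subseteq>
    (\<Union>S\<in>colour_sets m k. \<Union>T\<in>avoiding m k S.
       PiE {0..<n} (\<lambda>w. if w = u then {S} else if w = v then {T} else avoiding m k (S \<union> T)))"
proof
  fix F assume F: "F \<in> assignments n m k \<inter> isolated_at n u \<inter> isolated_at n v"
  then have cs: "\<And>w. w < n \<Longrightarrow> F w \<in> colour_sets m k" and "F \<in> extensional {0..<n}"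
    by (auto simp: assignments_def PiE_iff)
  moreover have "F v \<in> avoiding m k (F u)"
    using F cs[OF assms(2)] assms by (auto simp: isolated_at_def rig_adj_def avoiding_def)
  moreover have "F \<in> PiE {0..<n} (\<lambda>w. if w = u then {F u} else if w = v then {F v}
                     else avoiding m k (F u \<union> F v))"
    using F cs \<open>F \<in> extensional {0..<n}\<close>
    by (auto simp: PiE_iff isolated_at_def rig_adj_def avoiding_def)
  ultimately show "F \<in> (\<Union>S\<in>colour_sets m k. \<Union>T\<in>avoiding m k S.
       PiE {0..<n} (\<lambda>w. if w = u then {S} else if w = v then {T} else avoiding m k (S \<union> T)))"
    using assms(1) by blast
qed

lemma card_assignments_Int_isolated_at_pair_le:
  assumes "u < n" "v < n" "u \<noteq> v"
  shows "card (assignments n m k \<inter> isolated_at n u \<inter> isolated_at n v) \<le>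
     (m choose k) * ((m - k) choose k) * ((m - 2 * k) choose k) ^ (n - 2)"
proof -
  let ?P = "\<lambda>S T. PiE {0..<n} (\<lambda>w. if w = u then {S} else if w = v then {T} else avoiding m k (S \<union> T))"
  have fin: "finite (?P S T)" for S T
    by (auto intro!: finite_PiE simp: finite_avoiding)
  have card_P: "card (?P S T) = ((m - 2 * k) choose k) ^ (n - 2)"
    if "S \<in> colour_sets m k" "T \<in> avoiding m k S" for S T
  proof -
    have "card (S \<union> T) = 2 * k" "S \<union> T \<subseteq> {0..<m}"
      using that by (auto simp: avoiding_def colour_sets_def finite_subset card_Un_disjoint Int_commute)
    then have "card (avoiding m k (S \<union> T)) = (m - 2 * k) choose k"
      by (simp add: card_avoiding)
    moreover have "card ({0..<n} - {u} - {v}) = n - 2"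
      using assms by (simp add: card_Diff_subset)
    ultimately show ?thesis
      using assms by (simp add: card_PiE prod.remove[of "{0..<n}" u] prod.remove[of "{0..<n} - {u}" v])
  qed
  have "card (assignments n m k \<inter> isolated_at n u \<inter> isolated_at n v)
      \<le> card (\<Union>S\<in>colour_sets m k. \<Union>T\<in>avoiding m k S. ?P S T)"
    by (intro card_mono assignments_Int_isolated_at_pair_subset[OF assms] finite_UN_I
        finite_colour_sets finite_avoiding fin)
  also have "\<dots> \<le> (\<Sum>S\<in>colour_sets m k. \<Sum>T\<in>avoiding m k S. card (?P S T))"
    by (intro order_trans[OF card_UN_le[OF finite_colour_sets]] sum_mono card_UN_le finite_avoiding)
  also have "\<dots> = (\<Sum>S\<in>colour_sets m k. \<Sum>T\<in>avoiding m k S. ((m - 2 * k) choose k) ^ (n - 2))"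
    by (intro sum.cong refl card_P)
  also have "\<dots> = (\<Sum>S\<in>colour_sets m k. ((m - k) choose k) * ((m - 2 * k) choose k) ^ (n - 2))"
    by (intro sum.cong refl) (simp add: card_avoiding colour_sets_def)
  also have "\<dots> = (m choose k) * ((m - k) choose k) * ((m - 2 * k) choose k) ^ (n - 2)"
    by (simp add: card_colour_sets)
  finally show ?thesis .
qed

section \<open>First and second moments\<close>

lemma card_UN_second_moment:
  fixes E :: "'i \<Rightarrow> 'a set"
  assumes I: "finite I" and E: "\<And>i. i \<in> I \<Longrightarrow> finite (E i)"
  shows "(\<Sum>i\<in>I. real (card (E i)))\<^sup>2
           \<le> real (card (\<Union>i\<in>I. E i)) * (\<Sum>i\<in>I. \<Sum>j\<in>I. real (card (E i \<inter> E j)))"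
proof -
  define U where "U = (\<Union>i\<in>I. E i)"
  define X where "X x = (\<Sum>i\<in>I. indicator (E i) x :: real)" for x
  have U: "finite U" unfolding U_def using I E by blast
  have card_eq: "real (card A) = (\<Sum>x\<in>U. indicator A x)" if "A \<subseteq> U" for A
  proof -
    have "(\<Sum>x\<in>U. indicator A x :: real) = card (U \<inter> A)"
      by (simp add: indicator_def sum.inter_restrict U)
    then show ?thesis using that by (simp add: Int_absorb1)
  qed
  have "(\<Sum>i\<in>I. real (card (E i))) = (\<Sum>i\<in>I. \<Sum>x\<in>U. indicator (E i) x)"
    by (intro sum.cong refl card_eq) (auto simp: U_def)
  also have "\<dots> = (\<Sum>x\<in>U. 1 * X x)"
    unfolding X_def by (simp add: sum.swap[of _ I])
  also have "(\<dots>)\<^sup>2 \<le> (\<Sum>x\<in>U. 1\<^sup>2) * (\<Sum>x\<in>U. (X x)\<^sup>2)"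
    by (rule Cauchy_Schwarz_ineq_sum)
  also have "(\<Sum>x\<in>U. (X x)\<^sup>2) = (\<Sum>i\<in>I. \<Sum>j\<in>I. \<Sum>x\<in>U. indicator (E i \<inter> E j) x)"
    unfolding X_def power2_eq_square sum_product indicator_inter_arith
    by (simp add: sum.swap[of _ U])
  also have "\<dots> = (\<Sum>i\<in>I. \<Sum>j\<in>I. real (card (E i \<inter> E j)))"
    by (intro sum.cong refl card_eq[symmetric]) (auto simp: U_def)
  finally show ?thesis by (simp add: U_def)
qed

lemma prob_pmf_of_set_UN_second_moment:
  fixes E :: "'i \<Rightarrow> 'a set"
  assumes \<Omega>: "finite \<Omega>" "\<Omega> \<noteq> {}" and I: "finite I"
  defines "P \<equiv> measure_pmf.prob (pmf_of_set \<Omega>)"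
  shows "(\<Sum>i\<in>I. P (E i))\<^sup>2 \<le> P (\<Union>i\<in>I. E i) * (\<Sum>i\<in>I. \<Sum>j\<in>I. P (E i \<inter> E j))"
proof -
  define c where "c = real (card \<Omega>)"
  have c: "c > 0" using \<Omega> by (simp add: c_def card_gt_0_iff)
  have P: "P A = real (card (\<Omega> \<inter> A)) / c" for A
    using \<Omega> by (simp add: P_def c_def measure_pmf_of_set)
  have "(\<Sum>i\<in>I. real (card (\<Omega> \<inter> E i)))\<^sup>2 \<le> real (card (\<Union>i\<in>I. \<Omega> \<inter> E i))
          * (\<Sum>i\<in>I. \<Sum>j\<in>I. real (card ((\<Omega> \<inter> E i) \<inter> (\<Omega> \<inter> E j))))"
    using \<Omega> I by (intro card_UN_second_moment) auto
  also have "(\<Union>i\<in>I. \<Omega> \<inter> E i) = \<Omega> \<inter> (\<Union>i\<in>I. E i)" by blast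
  also have "(\<lambda>i j. (\<Omega> \<inter> E i) \<inter> (\<Omega> \<inter> E j)) = (\<lambda>i j. \<Omega> \<inter> (E i \<inter> E j))" by blast
  finally have "(\<Sum>i\<in>I. real (card (\<Omega> \<inter> E i)))\<^sup>2 / c\<^sup>2 \<le> real (card (\<Omega> \<inter> (\<Union>i\<in>I. E i)))
          * (\<Sum>i\<in>I. \<Sum>j\<in>I. real (card (\<Omega> \<inter> (E i \<inter> E j)))) / c\<^sup>2"
    by (rule divide_right_mono) simp
  then show ?thesis
    by (simp add: P sum_divide_distrib[symmetric] power_divide power2_eq_square)
qed

lemma prob_rig:
  assumes "k \<le> m"
  shows "measure_pmf.prob (rig n m k) A = real (card (assignments n m k \<inter> A)) / real (m choose k) ^ n"
proof -
  have "assignments n m k \<noteq> {}"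
    using assms card_assignments[of n m k] by (auto simp del: card_assignments)
  then show ?thesis
    by (simp add: rig_def measure_pmf_of_set finite_assignments card_assignments)
qed

lemma prob_isolated_at:
  assumes "k \<le> m" "v < n"
  shows "measure_pmf.prob (rig n m k) (isolated_at n v) = avoid_prob m k k ^ (n - 1)"
proof -
  obtain j where n: "n = Suc j" using assms(2) by (metis lessE)
  have "real (m choose k) > 0" using assms(1) by simp
  then show ?thesis
    using assms by (simp add: prob_rig card_assignments_Int_isolated_at avoid_prob_def n power_divide)
qed

lemma prob_isolated_at_pair_le:
  assumes "k \<le> m" "u < n" "v < n" "u \<noteq> v"
  shows "measure_pmf.prob (rig n m k) (isolated_at n u \<inter> isolated_at n v)
           \<le> avoid_prob m k k * avoid_prob m k (2 * k) ^ (n - 2)"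
proof -
  define N where "N = real (m choose k)"
  have N: "N > 0" using assms(1) by (simp add: N_def)
  have "2 \<le> n" using assms(2-4) by linarith
  then obtain j where n: "n = Suc (Suc j)" by (metis add_2_eq_Suc le_Suc_ex)
  have "measure_pmf.prob (rig n m k) (isolated_at n u \<inter> isolated_at n v)
      = real (card (assignments n m k \<inter> isolated_at n u \<inter> isolated_at n v)) / N ^ n"
    using assms(1) by (simp add: prob_rig N_def Int_assoc)
  also have "\<dots> \<le> N * real ((m - k) choose k) * real ((m - 2 * k) choose k) ^ (n - 2) / N ^ n"
    using card_assignments_Int_isolated_at_pair_le[OF assms(2-4), of m k]
    by (intro divide_right_mono) (simp_all add: N_def flip: of_nat_mult of_nat_power)
  also have "\<dots> = avoid_prob m k k * avoid_prob m k (2 * k) ^ (n - 2)"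
    using N by (simp add: avoid_prob_def N_def[symmetric] n power_divide)
  finally show ?thesis .
qed

lemma Collect_has_isolated_vertex: "{F. has_isolated_vertex n F} = (\<Union>v<n. isolated_at n v)"
  by (auto simp: has_isolated_vertex_def isolated_at_def)

lemma prob_has_isolated_vertex_le:
  assumes "k \<le> m"
  shows "measure_pmf.prob (rig n m k) {F. has_isolated_vertex n F} \<le> real n * avoid_prob m k k ^ (n - 1)"
proof -
  have "measure_pmf.prob (rig n m k) {F. has_isolated_vertex n F}
          \<le> (\<Sum>v<n. measure_pmf.prob (rig n m k) (isolated_at n v))"
    unfolding Collect_has_isolated_vertex by (intro measure_pmf.finite_measure_subadditive_finite) auto
  also have "\<dots> = real n * avoid_prob m k k ^ (n - 1)"
    using assms by (simp add: prob_isolated_at)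
  finally show ?thesis .
qed

lemma sum_prob_isolated_at_pairs_le:
  assumes "k \<le> m"
  shows "(\<Sum>u<n. \<Sum>v<n. measure_pmf.prob (rig n m k) (isolated_at n u \<inter> isolated_at n v))
           \<le> real n * avoid_prob m k k ^ (n - 1)
             + real n * (real n - 1) * (avoid_prob m k k * avoid_prob m k (2 * k) ^ (n - 2))"
proof -
  let ?P = "measure_pmf.prob (rig n m k)"
  have "(\<Sum>u<n. \<Sum>v<n. ?P (isolated_at n u \<inter> isolated_at n v))
      = (\<Sum>u<n. ?P (isolated_at n u) + (\<Sum>v\<in>{..<n} - {u}. ?P (isolated_at n u \<inter> isolated_at n v)))"
    by (intro sum.cong refl) (simp add: sum.remove)
  also have "\<dots> \<le> (\<Sum>u<n. avoid_prob m k k ^ (n - 1)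
                   + (\<Sum>v\<in>{..<n} - {u}. avoid_prob m k k * avoid_prob m k (2 * k) ^ (n - 2)))"
    using assms by (intro sum_mono add_mono) (auto simp: prob_isolated_at prob_isolated_at_pair_le)
  also have "\<dots> = real n * avoid_prob m k k ^ (n - 1)
                   + real n * (real n - 1) * (avoid_prob m k k * avoid_prob m k (2 * k) ^ (n - 2))"
    by (cases n) (simp_all add: algebra_simps)
  finally show ?thesis .
qed

lemma prob_has_isolated_vertex_ge:
  assumes "1 \<le> k" "k \<le> m" "2 \<le> n" and p_pos: "avoid_prob m k k > 0"
  shows "inverse (inverse (real n * avoid_prob m k k ^ (n - 1)) + inverse (avoid_prob m k k))
           \<le> measure_pmf.prob (rig n m k) {F. has_isolated_vertex n F}"
proof -
  define P where "P = measure_pmf.prob (rig n m k) {F. has_isolated_vertex n F}"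
  define p where "p = avoid_prob m k k"
  define q where "q = avoid_prob m k (2 * k)"
  define a where "a = real n * p ^ (n - 1)"
  have p: "p > 0" and a: "a > 0" using p_pos assms by (simp_all add: p_def a_def)
  have q: "0 \<le> q" "q \<le> p\<^sup>2"
    using avoid_prob_submult[OF assms(1,2), of k k]
    by (simp_all add: p_def q_def avoid_prob_nonneg mult_2 power2_eq_square)
  have "(\<Sum>v<n. measure_pmf.prob (rig n m k) (isolated_at n v))\<^sup>2 \<le> P *
          (\<Sum>u<n. \<Sum>v<n. measure_pmf.prob (rig n m k) (isolated_at n u \<inter> isolated_at n v))"
    unfolding P_def Collect_has_isolated_vertex rig_def using assms card_assignments[of n m k]
    by (intro prob_pmf_of_set_UN_second_moment finite_assignments) (auto simp del: card_assignments)
  also have "\<dots> \<le> P * (a + real n * (real n - 1) * (p * q ^ (n - 2)))"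
    using sum_prob_isolated_at_pairs_le[OF assms(2), of n]
    by (intro mult_left_mono) (simp_all add: P_def a_def p_def q_def)
  also have "real n * (real n - 1) * (p * q ^ (n - 2)) \<le> real n * real n * (p * (p\<^sup>2) ^ (n - 2))"
    using p q by (intro mult_mono mult_left_mono power_mono) auto
  also have "real n * real n * (p * (p\<^sup>2) ^ (n - 2)) = a\<^sup>2 / p"
  proof -
    obtain j where n: "n = Suc (Suc j)" using assms(3) by (metis add_2_eq_Suc le_Suc_ex)
    have "p * (p\<^sup>2) ^ (n - 2) * p = (p ^ (n - 1))\<^sup>2"
      unfolding n by (simp add: power2_eq_square power_mult_distrib mult_ac)
    then show ?thesis using p by (simp add: a_def field_simps power2_eq_square)
  qed
  finally have "a\<^sup>2 \<le> P * (a + a\<^sup>2 / p)"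
    using assms by (simp add: prob_isolated_at a_def p_def P_def mult_left_mono)
  then have "a\<^sup>2 / (a + a\<^sup>2 / p) \<le> P"
    using a p by (simp add: divide_le_eq add_pos_pos)
  moreover have "a\<^sup>2 / (a + a\<^sup>2 / p) = inverse (inverse a + inverse p)"
  proof -
    have "a + a\<^sup>2 / p = a * (a + p) / p"
      using p by (simp add: field_simps power2_eq_square)
    moreover have "inverse a + inverse p = (a + p) / (a * p)"
      using a p by (simp add: field_simps)
    ultimately show ?thesis
      using a p by (simp add: power2_eq_square divide_divide_eq_right)
  qed
  ultimately show ?thesis by (simp add: P_def a_def p_def)
qed

section \<open>Asymptotics\<close>

lemma mult_power_le_exp_bound:
  fixes p s :: real
  assumes "0 \<le> p" "p \<le> exp (- s)" "0 \<le> s" "1 \<le> n"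
  shows "real n * p ^ (n - 1) \<le> exp 1 * exp (- (real n * s - ln (real n))) + real n * exp (- (real n - 1))"
proof -
  have "p ^ (n - 1) \<le> exp (- s) ^ (n - 1)"
    using assms by (intro power_mono) auto
  also have "\<dots> = exp (- s * (real n - 1))"
    using assms(4) by (simp add: exp_of_nat_mult[symmetric] of_nat_diff mult.commute)
  finally have "real n * p ^ (n - 1) \<le> real n * exp (- s * (real n - 1))"
    by (simp add: mult_left_mono)
  also have "\<dots> \<le> exp 1 * exp (- (real n * s - ln (real n))) + real n * exp (- (real n - 1))"
  proof (cases "s \<le> 1")
    case True
    have "exp 1 * exp (- (real n * s - ln (real n))) * exp (s - 1) = exp (ln (real n)) * exp (- s * (real n - 1))"
      by (simp only: exp_add[symmetric]) (simp add: algebra_simps)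
    then have "real n * exp (- s * (real n - 1)) = exp 1 * exp (- (real n * s - ln (real n))) * exp (s - 1)"
      using assms(4) by simp
    also have "\<dots> \<le> exp 1 * exp (- (real n * s - ln (real n)))"
      using True by (simp add: mult_left_le)
    finally show ?thesis by (simp add: add_increasing2)
  next
    case False
    have "1 * (real n - 1) \<le> s * (real n - 1)"
      using False assms(4) by (intro mult_right_mono) auto
    then have "- s * (real n - 1) \<le> - (real n - 1)" by simp
    then have "real n * exp (- s * (real n - 1)) \<le> real n * exp (- (real n - 1))"
      by (simp add: mult_left_mono)
    then show ?thesis by (smt (verit) exp_gt_zero mult_pos_pos)
  qed
  finally show ?thesis .
qed

lemma prob_no_isolated_vertex_tendsto_1:
  fixes k m :: "nat \<Rightarrow> nat"
  assumes km: "\<And>n. 1 \<le> k n \<and> k n \<le> m n"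
    and lim: "filterlim (\<lambda>n. real (k n)^2 * real n / real (m n) - ln (real n)) at_top sequentially"
  shows "(\<lambda>n. measure_pmf.prob (rig n (m n) (k n)) {F. \<not> has_isolated_vertex n F}) \<longlonglongrightarrow> 1"
proof (rule tendsto_sandwich[OF _ _ _ tendsto_const])
  define g where "g n = real (k n)^2 * real n / real (m n) - ln (real n)" for n
  define lo where "lo n = 1 - (exp 1 * exp (- g n) + real n * exp (- (real n - 1)))" for n
  have "(\<lambda>n. exp (- g n)) \<longlonglongrightarrow> 0"
    using lim unfolding g_def filterlim_uminus_at_top
    by (intro filterlim_compose[OF exp_at_bot]) simp
  moreover have "(\<lambda>n. real n * exp (- (real n - 1))) \<longlonglongrightarrow> 0"
    by real_asymp
  ultimately have "lo \<longlonglongrightarrow> 1 - (exp 1 * 0 + 0)"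
    unfolding lo_def by (intro tendsto_intros)
  then show "lo \<longlonglongrightarrow> 1" by simp
  show "\<forall>\<^sub>F n in sequentially. lo n \<le> measure_pmf.prob (rig n (m n) (k n)) {F. \<not> has_isolated_vertex n F}"
    using eventually_ge_at_top[of "1::nat"]
  proof eventually_elim
    case (elim n)
    have "real n * avoid_prob (m n) (k n) (k n) ^ (n - 1) \<le> exp 1 * exp (- g n) + real n * exp (- (real n - 1))"
      using mult_power_le_exp_bound[OF avoid_prob_nonneg avoid_prob_le_exp _ elim, of "k n" "m n" "k n"] km[of n]
      by (simp add: g_def power2_eq_square mult_ac)
    moreover have "measure_pmf.prob (rig n (m n) (k n)) {F. \<not> has_isolated_vertex n F}
        = 1 - measure_pmf.prob (rig n (m n) (k n)) {F. has_isolated_vertex n F}"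
      using measure_pmf.prob_compl[of "{F. has_isolated_vertex n F}" "rig n (m n) (k n)"]
      by (simp add: Collect_neg_eq Compl_eq_Diff_UNIV)
    ultimately show ?case
      using prob_has_isolated_vertex_le[of "k n" "m n" n] km[of n] by (simp add: lo_def)
  qed
  show "\<forall>\<^sub>F n in sequentially. measure_pmf.prob (rig n (m n) (k n)) {F. \<not> has_isolated_vertex n F} \<le> 1"
    by (simp add: measure_pmf.prob_le_1)
qed

lemma avoid_prob_below_threshold:
  assumes "1 \<le> k" "k \<le> m" "2 \<le> n"
    and below: "real k ^ 2 * real n / real m \<le> ln (real n)" and small: "ln (real n) / real n \<le> 1/3"
  shows "exp (- 3 * (ln (real n) / real n)) \<le> avoid_prob m k k"
    and "exp (ln (real n) - real k ^ 2 * real n / real m - 6 * (ln (real n) ^ 2 / real n))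
           \<le> real n * avoid_prob m k k ^ (n - 1)"
proof -
  define p where "p = avoid_prob m k k"
  define s where "s = real k ^ 2 / real m"
  define t where "t = real k / real m"
  define u where "u = ln (real n) / real n"
  have n: "real n > 0" using assms by simp
  have s_u: "s \<le> u" using below n by (simp add: s_def u_def field_simps)
  have t_s: "t \<le> s" using assms by (simp add: s_def t_def divide_right_mono power2_eq_square)
  have t: "0 \<le> t" "t \<le> 1/3"
    using t_s s_u small unfolding u_def by (simp add: t_def, linarith)
  then have "3 * k \<le> m" using assms by (simp add: t_def field_simps)
  then have p_ge: "exp (- s * (1 + 6 * t)) \<le> p"
    using avoid_prob_ge_exp[OF assms(1)] by (simp add: p_def s_def t_def)
  have s: "0 \<le> s" by (simp add: s_def)
  have "s * (1 + 6 * t) \<le> s * 3"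
    using t s by (intro mult_left_mono) auto
  then have "s * (1 + 6 * t) \<le> 3 * u"
    using s_u by linarith
  then show "exp (- 3 * (ln (real n) / real n)) \<le> avoid_prob m k k"
    using p_ge by (simp add: p_def u_def order_trans[rotated])
  have p: "0 \<le> p" "p \<le> 1"
    using assms by (simp_all add: p_def avoid_prob_nonneg avoid_prob_le_1)
  have "real n * s \<le> ln (real n)"
    using below by (simp add: s_def mult.commute)
  then have "real n * s * t \<le> ln (real n) * u"
    using t_s s_u t assms(3) by (intro mult_mono) auto
  then have "ln (real n) - real n * s - 6 * (ln (real n) * u) \<le> ln (real n) - real n * (s * (1 + 6 * t))"
    by (simp add: algebra_simps)
  then have "exp (ln (real n) - real n * s - 6 * (ln (real n) * u))
      \<le> exp (ln (real n)) * exp (real n * (- s * (1 + 6 * t)))"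
    by (simp only: exp_add[symmetric]) simp
  also have "\<dots> = real n * exp (- s * (1 + 6 * t)) ^ n"
    using n by (simp add: exp_of_nat_mult[symmetric])
  also have "\<dots> \<le> real n * p ^ n"
    using p_ge by (intro mult_left_mono power_mono) auto
  also have "\<dots> \<le> real n * p ^ (n - 1)"
    using p by (intro mult_left_mono power_decreasing) auto
  finally show "exp (ln (real n) - real k ^ 2 * real n / real m - 6 * (ln (real n) ^ 2 / real n))
           \<le> real n * avoid_prob m k k ^ (n - 1)"
    by (simp add: p_def s_def u_def power2_eq_square mult_ac)
qed

lemma avoid_prob_limits_below_threshold:
  fixes k m :: "nat \<Rightarrow> nat"
  assumes km: "\<And>n. 1 \<le> k n \<and> k n \<le> m n"
    and lim: "filterlim (\<lambda>n. ln (real n) - real (k n)^2 * real n / real (m n)) at_top sequentially"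
  defines "p \<equiv> \<lambda>n. avoid_prob (m n) (k n) (k n)"
  shows "p \<longlonglongrightarrow> 1" and "filterlim (\<lambda>n. real n * p n ^ (n - 1)) at_top sequentially"
proof -
  define h where "h n = ln (real n) - real (k n)^2 * real n / real (m n)" for n
  have "\<forall>\<^sub>F n in sequentially. 0 \<le> h n"
    using lim unfolding h_def filterlim_at_top by blast
  moreover have "\<forall>\<^sub>F n in sequentially. ln (real n) / real n \<le> 1/3"
    by real_asymp
  moreover have "\<forall>\<^sub>F n in sequentially. 2 \<le> n"
    by (rule eventually_ge_at_top)
  ultimately have bounds: "\<forall>\<^sub>F n in sequentially. p n \<le> 1
      \<and> exp (- 3 * (ln (real n) / real n)) \<le> p n
      \<and> exp (h n - 6 * (ln (real n) ^ 2 / real n)) \<le> real n * p n ^ (n - 1)"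
  proof eventually_elim
    case (elim n)
    have "p n \<le> 1" using km[of n] by (simp add: p_def avoid_prob_le_1)
    with elim avoid_prob_below_threshold[of "k n" "m n" n] km[of n] show ?case
      by (simp add: h_def p_def)
  qed
  have "\<forall>\<^sub>F n in sequentially. exp (- 3 * (ln (real n) / real n)) \<le> p n"
    and "\<forall>\<^sub>F n in sequentially. p n \<le> 1"
    by (rule eventually_mono[OF bounds], simp)+
  moreover have "(\<lambda>n::nat. exp (- 3 * (ln (real n) / real n))) \<longlonglongrightarrow> 1"
    by real_asymp
  ultimately show "p \<longlonglongrightarrow> 1"
    by (rule tendsto_sandwich[OF _ _ _ tendsto_const])
  have "(\<lambda>n::nat. - (6 * (ln (real n) ^ 2 / real n))) \<longlonglongrightarrow> 0"
    by real_asymp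
  then have "filterlim (\<lambda>n. - (6 * (ln (real n) ^ 2 / real n)) + h n) at_top sequentially"
    by (rule filterlim_tendsto_add_at_top) (use lim in \<open>simp add: h_def\<close>)
  then have "filterlim (\<lambda>n. exp (h n - 6 * (ln (real n) ^ 2 / real n))) at_top sequentially"
    by (intro filterlim_compose[OF exp_at_top]) simp
  moreover have "\<forall>\<^sub>F n in sequentially. exp (h n - 6 * (ln (real n) ^ 2 / real n)) \<le> real n * p n ^ (n - 1)"
    by (rule eventually_mono[OF bounds]) simp
  ultimately show "filterlim (\<lambda>n. real n * p n ^ (n - 1)) at_top sequentially"
    by (rule filterlim_at_top_mono)
qed

lemma prob_isolated_vertex_tendsto_1:
  fixes k m :: "nat \<Rightarrow> nat"
  assumes km: "\<And>n. 1 \<le> k n \<and> k n \<le> m n"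
    and lim: "filterlim (\<lambda>n. ln (real n) - real (k n)^2 * real n / real (m n)) at_top sequentially"
  shows "(\<lambda>n. measure_pmf.prob (rig n (m n) (k n)) {F. has_isolated_vertex n F}) \<longlonglongrightarrow> 1"
proof -
  define p where "p = (\<lambda>n. avoid_prob (m n) (k n) (k n))"
  define a where "a = (\<lambda>n. real n * p n ^ (n - 1))"
  have p_lim: "p \<longlonglongrightarrow> 1" and a_lim: "filterlim a at_top sequentially"
    using avoid_prob_limits_below_threshold[OF km lim] unfolding p_def a_def by simp_all
  have "\<forall>\<^sub>F n in sequentially. 0 < p n"
    using order_tendstoD(1)[OF p_lim, of 0] by simp
  moreover have "\<forall>\<^sub>F n in sequentially. 2 \<le> n"
    by (rule eventually_ge_at_top)
  ultimately have "\<forall>\<^sub>F n in sequentially.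
      inverse (inverse (a n) + inverse (p n)) \<le> measure_pmf.prob (rig n (m n) (k n)) {F. has_isolated_vertex n F}"
    by eventually_elim (use km prob_has_isolated_vertex_ge in \<open>simp add: a_def p_def\<close>)
  moreover have "\<forall>\<^sub>F n in sequentially. measure_pmf.prob (rig n (m n) (k n)) {F. has_isolated_vertex n F} \<le> 1"
    by (simp add: measure_pmf.prob_le_1)
  moreover have "(\<lambda>n. inverse (inverse (a n) + inverse (p n))) \<longlonglongrightarrow> 1"
    using tendsto_inverse[OF tendsto_add[OF tendsto_inverse_0_at_top[OF a_lim] tendsto_inverse[OF p_lim]]]
    by simp
  ultimately show ?thesis
    by (rule tendsto_sandwich[OF _ _ _ tendsto_const])
qed

theorem theorem2:
  fixes k m :: "nat \<Rightarrow> nat"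
  assumes km: "\<And>n. 1 \<le> k n \<and> k n \<le> m n"
  shows
   "(filterlim (\<lambda>n. real (k n)^2 * real n / real (m n) - ln (real n)) at_top sequentially
      \<longrightarrow> (\<lambda>n. measure_pmf.prob (rig n (m n) (k n)) {F. \<not> has_isolated_vertex n F})
            \<longlonglongrightarrow> 1)
  \<and> (filterlim (\<lambda>n. ln (real n) - real (k n)^2 * real n / real (m n)) at_top sequentially
      \<longrightarrow> (\<lambda>n. measure_pmf.prob (rig n (m n) (k n)) {F. has_isolated_vertex n F})
            \<longlonglongrightarrow> 1)"
  using prob_no_isolated_vertex_tendsto_1[of k m, OF km] prob_isolated_vertex_tendsto_1[of k m, OF km]
  by blast

end
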